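(* For every small model $M\preceq\mathbb{C}$ and every full $C\supseteq M$, every $M$-f.s. sequence $\langle A_i:i\in I\rangle$ over $C$ is an order-congruence over $C$.
   Context: Work in a monster model $\mathbb{C}$ of an arbitrary complete theory. For $B\supseteq M$, $\mathrm{tp}(A/B)$ is finitely satisfied in $M$ if each of its formulas is satisfied by a tuple from $M$. $C\supseteq M$ is full if every type in $S_n(M)$, for every $n$, is realized in $C$. $A_{<i}=\bigcup_{j<i}A_j$. An $M$-f.s. sequence over $C$ is a sequence of sets $\langle A_i:i\in I\rangle$ with $\mathrm{tp}(A_i/A_{<i}C)$ finitely satisfied in $M$ for every $i$. It is an order-congruence over $C$ if for every $i^*\in I$, all $i^*\le i_1<\dots<i_n$ and $i^*\le j_1<\dots<j_n$ in $I$, and all finite tuples $\bar a_k$ from $A_{i_k}$, $\bar b_k$ from $A_{j_k}$ with $\mathrm{tp}(\bar a_k/C)=\mathrm{tp}(\bar b_k/C)$ ($k=1,\dots,n$), we have $\mathrm{tp}(\bar a_1\dots\bar a_n/CA_{<i^*})=\mathrm{tp}(\bar b_1\dots\bar b_n/CA_{<i^*})$. *)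

theory Defs
  imports Main
begin

text \<open>Terms and formulas of a first-order language with function symbols 'f and
relation symbols 'r, with variables indexed by nat and with parameters (constants
naming elements of the monster model, of type 'a).\<close>

datatype ('f, 'a) trm = Var nat | Par 'a | Fn 'f "('f, 'a) trm list"

datatype ('f, 'r, 'a) fml =
    Eq "('f, 'a) trm" "('f, 'a) trm"
  | Rel 'r "('f, 'a) trm list"
  | Neg "('f, 'r, 'a) fml"
  | Conj "('f, 'r, 'a) fml" "('f, 'r, 'a) fml"
  | Ex nat "('f, 'r, 'a) fml"

fun tval :: "('f \<Rightarrow> 'a list \<Rightarrow> 'a) \<Rightarrow> (nat \<Rightarrow> 'a) \<Rightarrow> ('f, 'a) trm \<Rightarrow> 'a" where
  "tval F e (Var n) = e n"
| "tval F e (Par a) = a"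
| "tval F e (Fn f ts) = F f (map (tval F e) ts)"

fun tfv :: "('f, 'a) trm \<Rightarrow> nat set" where
  "tfv (Var n) = {n}"
| "tfv (Par a) = {}"
| "tfv (Fn f ts) = \<Union> (set (map tfv ts))"

fun tpar :: "('f, 'a) trm \<Rightarrow> 'a set" where
  "tpar (Var n) = {}"
| "tpar (Par a) = {a}"
| "tpar (Fn f ts) = \<Union> (set (map tpar ts))"

fun fv :: "('f, 'r, 'a) fml \<Rightarrow> nat set" where
  "fv (Eq s t) = tfv s \<union> tfv t"
| "fv (Rel r ts) = \<Union> (set (map tfv ts))"
| "fv (Neg \<phi>) = fv \<phi>"
| "fv (Conj \<phi> \<psi>) = fv \<phi> \<union> fv \<psi>"
| "fv (Ex x \<phi>) = fv \<phi> - {x}"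

fun params :: "('f, 'r, 'a) fml \<Rightarrow> 'a set" where
  "params (Eq s t) = tpar s \<union> tpar t"
| "params (Rel r ts) = \<Union> (set (map tpar ts))"
| "params (Neg \<phi>) = params \<phi>"
| "params (Conj \<phi> \<psi>) = params \<phi> \<union> params \<psi>"
| "params (Ex x \<phi>) = params \<phi>"

fun sat :: "'a set \<Rightarrow> ('f \<Rightarrow> 'a list \<Rightarrow> 'a) \<Rightarrow> ('r \<Rightarrow> 'a list \<Rightarrow> bool)
            \<Rightarrow> ('f, 'r, 'a) fml \<Rightarrow> (nat \<Rightarrow> 'a) \<Rightarrow> bool" where
  "sat D F R (Eq s t) e = (tval F e s = tval F e t)"
| "sat D F R (Rel r ts) e = R r (map (tval F e) ts)"
| "sat D F R (Neg \<phi>) e = (\<not> sat D F R \<phi> e)"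
| "sat D F R (Conj \<phi> \<psi>) e = (sat D F R \<phi> e \<and> sat D F R \<psi> e)"
| "sat D F R (Ex x \<phi>) e = (\<exists>d\<in>D. sat D F R \<phi> (e(x := d)))"

definition is_structure :: "'a set \<Rightarrow> ('f \<Rightarrow> 'a list \<Rightarrow> 'a) \<Rightarrow> bool" where
  "is_structure D F \<longleftrightarrow> D \<noteq> {} \<and> (\<forall>f xs. set xs \<subseteq> D \<longrightarrow> F f xs \<in> D)"

definition fmls_over :: "'a set \<Rightarrow> nat \<Rightarrow> ('f, 'r, 'a) fml set" where
  "fmls_over B n = {\<phi>. params \<phi> \<subseteq> B \<and> fv \<phi> \<subseteq> {..<n}}"

definition holds :: "'a set \<Rightarrow> ('f \<Rightarrow> 'a list \<Rightarrow> 'a) \<Rightarrow> ('r \<Rightarrow> 'a list \<Rightarrow> bool)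
                     \<Rightarrow> ('f, 'r, 'a) fml \<Rightarrow> 'a list \<Rightarrow> bool" where
  "holds D F R \<phi> as \<longleftrightarrow> sat D F R \<phi> (\<lambda>i. as ! i)"

definition tp :: "'a set \<Rightarrow> ('f \<Rightarrow> 'a list \<Rightarrow> 'a) \<Rightarrow> ('r \<Rightarrow> 'a list \<Rightarrow> bool)
                  \<Rightarrow> 'a list \<Rightarrow> 'a set \<Rightarrow> ('f, 'r, 'a) fml set" where
  "tp D F R as B = {\<phi> \<in> fmls_over B (length as). holds D F R \<phi> as}"

definition elem_sub :: "'a set \<Rightarrow> 'a set \<Rightarrow> ('f \<Rightarrow> 'a list \<Rightarrow> 'a) \<Rightarrow> ('r \<Rightarrow> 'a list \<Rightarrow> bool) \<Rightarrow> bool" where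
  "elem_sub M D F R \<longleftrightarrow> M \<subseteq> D \<and> is_structure M F \<and>
     (\<forall>\<phi> e. params \<phi> \<subseteq> M \<longrightarrow> (\<forall>n. e n \<in> M) \<longrightarrow> (sat M F R \<phi> e \<longleftrightarrow> sat D F R \<phi> e))"

definition fin_sat_in_monster :: "'a set \<Rightarrow> ('f \<Rightarrow> 'a list \<Rightarrow> 'a) \<Rightarrow> ('r \<Rightarrow> 'a list \<Rightarrow> bool)
                  \<Rightarrow> nat \<Rightarrow> ('f, 'r, 'a) fml set \<Rightarrow> bool" where
  "fin_sat_in_monster D F R n p \<longleftrightarrow>
     (\<forall>Q. Q \<subseteq> p \<longrightarrow> finite Q \<longrightarrow>
        (\<exists>ds. length ds = n \<and> set ds \<subseteq> D \<and> (\<forall>\<phi>\<in>Q. holds D F R \<phi> ds)))"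

text \<open>The monster model is kappa-saturated, where kappa is the cardinality of the set K:
every finitely satisfiable set of formulas over a parameter set of size < kappa is realized.\<close>
definition saturated :: "'a set \<Rightarrow> ('f \<Rightarrow> 'a list \<Rightarrow> 'a) \<Rightarrow> ('r \<Rightarrow> 'a list \<Rightarrow> bool) \<Rightarrow> 'k set \<Rightarrow> bool" where
  "saturated D F R K \<longleftrightarrow>
     (\<forall>B n p. B \<subseteq> D \<longrightarrow> (card_of B, card_of K) \<in> ordLess \<longrightarrow> p \<subseteq> fmls_over B n \<longrightarrow>
        fin_sat_in_monster D F R n p \<longrightarrow>
        (\<exists>ds. length ds = n \<and> set ds \<subseteq> D \<and> (\<forall>\<phi>\<in>p. holds D F R \<phi> ds)))"

definition Sn :: "'a set \<Rightarrow> ('f \<Rightarrow> 'a list \<Rightarrow> 'a) \<Rightarrow> ('r \<Rightarrow> 'a list \<Rightarrow> bool)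
                  \<Rightarrow> 'a set \<Rightarrow> nat \<Rightarrow> ('f, 'r, 'a) fml set set" where
  "Sn D F R M n = {p. p \<subseteq> fmls_over M n \<and>
       (\<forall>\<phi>\<in>fmls_over M n. \<phi> \<in> p \<or> Neg \<phi> \<in> p) \<and> fin_sat_in_monster D F R n p}"

definition full :: "'a set \<Rightarrow> ('f \<Rightarrow> 'a list \<Rightarrow> 'a) \<Rightarrow> ('r \<Rightarrow> 'a list \<Rightarrow> bool)
                    \<Rightarrow> 'a set \<Rightarrow> 'a set \<Rightarrow> bool" where
  "full D F R M C \<longleftrightarrow>
     (\<forall>n p. p \<in> Sn D F R M n \<longrightarrow> (\<exists>cs. length cs = n \<and> set cs \<subseteq> C \<and> p \<subseteq> tp D F R cs M))"

text \<open>tp(A/B) is finitely satisfied in M: every formula of tp(A/B) (which mentions only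
finitely many elements of A, listed as a tuple as) is satisfied by a tuple from M.\<close>
definition fin_sat_in :: "'a set \<Rightarrow> ('f \<Rightarrow> 'a list \<Rightarrow> 'a) \<Rightarrow> ('r \<Rightarrow> 'a list \<Rightarrow> bool)
                          \<Rightarrow> 'a set \<Rightarrow> 'a set \<Rightarrow> 'a set \<Rightarrow> bool" where
  "fin_sat_in D F R A B M \<longleftrightarrow>
     (\<forall>as. set as \<subseteq> A \<longrightarrow> (\<forall>\<phi>\<in>tp D F R as B.
        \<exists>ms. length ms = length as \<and> set ms \<subseteq> M \<and> holds D F R \<phi> ms))"

definition below :: "('i::linorder \<Rightarrow> 'a set) \<Rightarrow> 'i \<Rightarrow> 'a set" where
  "below A i = (\<Union>j\<in>{j. j < i}. A j)"

definition fs_sequence :: "'a set \<Rightarrow> ('f \<Rightarrow> 'a list \<Rightarrow> 'a) \<Rightarrow> ('r \<Rightarrow> 'a list \<Rightarrow> bool)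
                           \<Rightarrow> 'a set \<Rightarrow> 'a set \<Rightarrow> ('i::linorder \<Rightarrow> 'a set) \<Rightarrow> bool" where
  "fs_sequence D F R M C A \<longleftrightarrow> (\<forall>i. fin_sat_in D F R (A i) (below A i \<union> C) M)"

definition order_congruence :: "'a set \<Rightarrow> ('f \<Rightarrow> 'a list \<Rightarrow> 'a) \<Rightarrow> ('r \<Rightarrow> 'a list \<Rightarrow> bool)
                           \<Rightarrow> 'a set \<Rightarrow> ('i::linorder \<Rightarrow> 'a set) \<Rightarrow> bool" where
  "order_congruence D F R C A \<longleftrightarrow>
     (\<forall>istar is js aa bb.
        sorted_wrt (<) is \<and> sorted_wrt (<) js \<and>
        length js = length is \<and> length aa = length is \<and> length bb = length is \<and>
        (\<forall>i\<in>set is. istar \<le> i) \<and> (\<forall>j\<in>set js. istar \<le> j) \<and>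
        (\<forall>k<length is. set (aa ! k) \<subseteq> A (is ! k) \<and> set (bb ! k) \<subseteq> A (js ! k) \<and>
                        tp D F R (aa ! k) C = tp D F R (bb ! k) C)
        \<longrightarrow> tp D F R (concat aa) (C \<union> below A istar) = tp D F R (concat bb) (C \<union> below A istar))"

end

theory Submission
  imports Defs
begin

text \<open>Parameters from C and from the earlier blocks are turned into variables, interpreted by
an environment e with values in C \<union> A_<i*. By induction on the number of blocks one shows that
the concatenated blocks a_1 ... a_n and b_1 ... b_n, each followed by e, satisfy the same formulas
over M. In the inductive step let g and h be the environments given by the first n - 1 blocks
(followed by e); they have the same type over M. Fullness of C yields c in C realizing the type
of g over M. A formula over M cannot tell (a_n, g) from (a_n, c), since tp(a_n / A_<i_n C) is
finitely satisfied in M; nor (a_n, c) from (b_n, c), since tp(a_n / C) = tp(b_n / C); nor, by the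
same argument for b_n, (b_n, c) from (b_n, h).\<close>

section \<open>Substitution, renaming and abstraction of parameters\<close>

lemma tval_cong: "(\<forall>n\<in>tfv t. e1 n = e2 n) \<Longrightarrow> tval F e1 t = tval F e2 t"
  by (induction t) (auto cong: map_cong)

lemma sat_cong: "(\<forall>n\<in>fv \<phi>. e1 n = e2 n) \<Longrightarrow> sat D F R \<phi> e1 = sat D F R \<phi> e2"
proof (induction \<phi> arbitrary: e1 e2)
  case (Eq s t)
  then show ?case using tval_cong[of s e1 e2 F] tval_cong[of t e1 e2 F] by auto
next
  case (Rel r ts)
  then have "map (tval F e1) ts = map (tval F e2) ts" by (intro map_cong refl tval_cong) auto
  then show ?case by (simp only: sat.simps)
next
  case (Conj \<phi> \<psi>)
  then show ?case by (metis UnCI fv.simps(4) sat.simps(4))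
next
  case (Ex x \<phi>)
  have "sat D F R \<phi> (e1(x := d)) = sat D F R \<phi> (e2(x := d))" for d
    using Ex.prems by (intro Ex.IH) auto
  then show ?case by simp
qed auto

lemma finite_tfv: "finite (tfv t)"
  by (induction t) auto

lemma finite_fv: "finite (fv \<phi>)"
  by (induction \<phi>) (auto simp: finite_tfv)

lemma finite_tpar: "finite (tpar t)"
  by (induction t) auto

lemma finite_params: "finite (params \<phi>)"
  by (induction \<phi>) (auto simp: finite_tpar)

fun tsubst_par :: "(nat \<Rightarrow> 'a option) \<Rightarrow> ('f, 'a) trm \<Rightarrow> ('f, 'a) trm" where
  "tsubst_par s (Var n) = (case s n of Some a \<Rightarrow> Par a | None \<Rightarrow> Var n)"
| "tsubst_par s (Par a) = Par a"
| "tsubst_par s (Fn f ts) = Fn f (map (tsubst_par s) ts)"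

fun subst_par :: "(nat \<Rightarrow> 'a option) \<Rightarrow> ('f, 'r, 'a) fml \<Rightarrow> ('f, 'r, 'a) fml" where
  "subst_par s (Eq t u) = Eq (tsubst_par s t) (tsubst_par s u)"
| "subst_par s (Rel r ts) = Rel r (map (tsubst_par s) ts)"
| "subst_par s (Neg \<phi>) = Neg (subst_par s \<phi>)"
| "subst_par s (Conj \<phi> \<psi>) = Conj (subst_par s \<phi>) (subst_par s \<psi>)"
| "subst_par s (Ex x \<phi>) = Ex x (subst_par (s(x := None)) \<phi>)"

definition env_override :: "(nat \<Rightarrow> 'a option) \<Rightarrow> (nat \<Rightarrow> 'a) \<Rightarrow> nat \<Rightarrow> 'a" where
  "env_override s e n = (case s n of Some a \<Rightarrow> a | None \<Rightarrow> e n)"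

lemma tval_tsubst_par: "tval F e (tsubst_par s t) = tval F (env_override s e) t"
  by (induction t) (auto simp: env_override_def comp_def split: option.split cong: map_cong)

lemma sat_subst_par: "sat D F R (subst_par s \<phi>) e = sat D F R \<phi> (env_override s e)"
proof (induction \<phi> arbitrary: s e)
  case (Ex x \<phi>)
  have "env_override (s(x := None)) (e(x := d)) = (env_override s e)(x := d)" for d
    by (auto simp: env_override_def fun_eq_iff split: option.split)
  then show ?case using Ex.IH[of "s(x := None)"] by (simp only: sat.simps subst_par.simps)
qed (auto simp: tval_tsubst_par comp_def)

lemma tfv_tsubst_par: "tfv (tsubst_par s t) = {n \<in> tfv t. s n = None}"
  by (induction t) (auto split: option.split)

lemma fv_subst_par: "fv (subst_par s \<phi>) = {n \<in> fv \<phi>. s n = None}"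
  by (induction \<phi> arbitrary: s) (auto simp: tfv_tsubst_par)

lemma tpar_tsubst_par: "tpar (tsubst_par s t) \<subseteq> tpar t \<union> {a. \<exists>n\<in>tfv t. s n = Some a}"
proof (induction t)
  case (Fn f ts)
  then show ?case by force
qed (auto split: option.split)

lemma params_subst_par: "params (subst_par s \<phi>) \<subseteq> params \<phi> \<union> {a. \<exists>n\<in>fv \<phi>. s n = Some a}"
proof (induction \<phi> arbitrary: s)
  case (Eq t u)
  then show ?case using tpar_tsubst_par[of s t] tpar_tsubst_par[of s u] by auto
next
  case (Rel r ts)
  then show ?case using tpar_tsubst_par[of s] by fastforce
next
  case (Ex x \<phi>)
  have "params (subst_par (s(x := None)) \<phi>) \<subseteq> params \<phi> \<union> {a. \<exists>n\<in>fv \<phi>. (s(x := None)) n = Some a}"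
    by (rule Ex.IH)
  also have "\<dots> \<subseteq> params (Ex x \<phi>) \<union> {a. \<exists>n\<in>fv (Ex x \<phi>). s n = Some a}"
    by auto
  finally show ?case by simp
next
  case (Conj \<phi> \<psi>)
  then show ?case by fastforce
qed auto

fun trename :: "(nat \<Rightarrow> nat) \<Rightarrow> ('f, 'a) trm \<Rightarrow> ('f, 'a) trm" where
  "trename p (Var n) = Var (p n)"
| "trename p (Par a) = Par a"
| "trename p (Fn f ts) = Fn f (map (trename p) ts)"

fun rename :: "(nat \<Rightarrow> nat) \<Rightarrow> ('f, 'r, 'a) fml \<Rightarrow> ('f, 'r, 'a) fml" where
  "rename p (Eq t u) = Eq (trename p t) (trename p u)"
| "rename p (Rel r ts) = Rel r (map (trename p) ts)"
| "rename p (Neg \<phi>) = Neg (rename p \<phi>)"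
| "rename p (Conj \<phi> \<psi>) = Conj (rename p \<phi>) (rename p \<psi>)"
| "rename p (Ex x \<phi>) = Ex (p x) (rename p \<phi>)"

lemma tval_trename: "tval F e (trename p t) = tval F (e \<circ> p) t"
  by (induction t) (auto simp: comp_def cong: map_cong)

lemma sat_rename: "inj p \<Longrightarrow> sat D F R (rename p \<phi>) e = sat D F R \<phi> (e \<circ> p)"
proof (induction \<phi> arbitrary: e)
  case (Ex x \<phi>)
  have "e(p x := d) \<circ> p = (e \<circ> p)(x := d)" for d
    using Ex.prems by (auto simp: fun_eq_iff inj_eq)
  then show ?case using Ex by (simp only: sat.simps rename.simps)
qed (auto simp: tval_trename comp_def)

lemma tfv_trename: "tfv (trename p t) = p ` tfv t"
  by (induction t) auto

lemma fv_rename: "fv (rename p \<phi>) \<subseteq> p ` fv \<phi>"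
  by (induction \<phi>) (auto simp: tfv_trename)

lemma tpar_trename: "tpar (trename p t) = tpar t"
  by (induction t) auto

lemma params_rename: "params (rename p \<phi>) = params \<phi>"
  by (induction \<phi>) (auto simp: tpar_trename)

fun tabstract_par :: "('a \<Rightarrow> nat) \<Rightarrow> 'a set \<Rightarrow> ('f, 'a) trm \<Rightarrow> ('f, 'a) trm" where
  "tabstract_par h P (Var n) = Var n"
| "tabstract_par h P (Par a) = (if a \<in> P then Var (h a) else Par a)"
| "tabstract_par h P (Fn f ts) = Fn f (map (tabstract_par h P) ts)"

fun abstract_par :: "('a \<Rightarrow> nat) \<Rightarrow> 'a set \<Rightarrow> ('f, 'r, 'a) fml \<Rightarrow> ('f, 'r, 'a) fml" where
  "abstract_par h P (Eq t u) = Eq (tabstract_par h P t) (tabstract_par h P u)"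
| "abstract_par h P (Rel r ts) = Rel r (map (tabstract_par h P) ts)"
| "abstract_par h P (Neg \<phi>) = Neg (abstract_par h P \<phi>)"
| "abstract_par h P (Conj \<phi> \<psi>) = Conj (abstract_par h P \<phi>) (abstract_par h P \<psi>)"
| "abstract_par h P (Ex x \<phi>) = Ex x (abstract_par h P \<phi>)"

fun bound_vars :: "('f, 'r, 'a) fml \<Rightarrow> nat set" where
  "bound_vars (Eq t u) = {}"
| "bound_vars (Rel r ts) = {}"
| "bound_vars (Neg \<phi>) = bound_vars \<phi>"
| "bound_vars (Conj \<phi> \<psi>) = bound_vars \<phi> \<union> bound_vars \<psi>"
| "bound_vars (Ex x \<phi>) = insert x (bound_vars \<phi>)"

lemma finite_bound_vars: "finite (bound_vars \<phi>)"
  by (induction \<phi>) auto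

lemma tval_tabstract_par: "\<forall>a\<in>P. e (h a) = a \<Longrightarrow> tval F e (tabstract_par h P t) = tval F e t"
  by (induction t) (auto simp: comp_def cong: map_cong)

lemma sat_abstract_par:
  "\<forall>a\<in>P. e (h a) = a \<Longrightarrow> \<forall>a\<in>P. h a \<notin> bound_vars \<phi> \<Longrightarrow>
   sat D F R (abstract_par h P \<phi>) e = sat D F R \<phi> e"
  by (induction \<phi> arbitrary: e) (auto simp: tval_tabstract_par comp_def)

lemma tpar_tabstract_par: "tpar (tabstract_par h P t) = tpar t - P"
  by (induction t) auto

lemma params_abstract_par: "params (abstract_par h P \<phi>) = params \<phi> - P"
  by (induction \<phi>) (auto simp: tpar_tabstract_par)

section \<open>Types of environments\<close>

definition plug :: "nat \<Rightarrow> 'a list \<Rightarrow> (nat \<Rightarrow> 'a) \<Rightarrow> nat \<Rightarrow> 'a" where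
  "plug p xs g k = (if p \<le> k \<and> k < p + length xs then xs ! (k - p) else g k)"

lemma plug_append: "plug 0 (xs @ ys) g = plug (length xs) ys (plug 0 xs g)"
  by (auto simp: fun_eq_iff plug_def nth_append)

lemma plug_in: "set xs \<subseteq> S \<Longrightarrow> \<forall>k. g k \<in> S \<Longrightarrow> plug p xs g k \<in> S"
  by (auto simp: plug_def)

lemma holds_plug: "fv \<phi> \<subseteq> {..<length xs} \<Longrightarrow> holds D F R \<phi> xs = sat D F R \<phi> (plug 0 xs g)"
  unfolding holds_def by (rule sat_cong) (auto simp: plug_def)

definition block_swap :: "nat \<Rightarrow> nat \<Rightarrow> nat \<Rightarrow> nat" where
  "block_swap p n k = (if k < p then k + n else if k < p + n then k - p else k)"

lemma inj_block_swap: "inj (block_swap p n)"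
  by (auto simp: inj_def block_swap_def split: if_splits)

lemma block_formula:
  assumes pB: "params \<phi> \<subseteq> B" and gB: "\<forall>k. g k \<in> B"
  obtains \<chi> where "\<chi> \<in> fmls_over B n"
    and "\<And>xs. length xs = n \<Longrightarrow> holds D F R \<chi> xs = sat D F R \<phi> (plug p xs g)"
proof -
  define s where "s = (\<lambda>k. if p \<le> k \<and> k < p + n then None else Some (g k))"
  define \<chi> where "\<chi> = rename (block_swap p n) (subst_par s \<phi>)"
  have "fv (subst_par s \<phi>) \<subseteq> {p..<p + n}"
    by (auto simp: fv_subst_par s_def)
  then have "fv \<chi> \<subseteq> {..<n}"
    using fv_rename[of "block_swap p n" "subst_par s \<phi>"] by (force simp: \<chi>_def block_swap_def)
  moreover have "params \<chi> \<subseteq> B"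
    using params_subst_par[of s \<phi>] pB gB by (force simp: \<chi>_def params_rename s_def split: if_splits)
  moreover have "holds D F R \<chi> xs = sat D F R \<phi> (plug p xs g)" if "length xs = n" for xs
  proof -
    have "env_override s ((!) xs \<circ> block_swap p n) = plug p xs g"
      using that by (auto simp: fun_eq_iff env_override_def s_def plug_def block_swap_def)
    then show ?thesis
      by (simp add: holds_def \<chi>_def sat_rename[OF inj_block_swap] sat_subst_par)
  qed
  ultimately show ?thesis using that by (auto simp: fmls_over_def)
qed

lemma block_instance:
  obtains \<psi> where "params \<psi> \<subseteq> params \<phi> \<union> set xs" and "fv \<psi> \<subseteq> fv \<phi> - {p..<p + length xs}"
    and "\<And>g. sat D F R \<psi> g = sat D F R \<phi> (plug p xs g)"
proof
  define s where "s = (\<lambda>k. if p \<le> k \<and> k < p + length xs then Some (xs ! (k - p)) else None)"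
  show "params (subst_par s \<phi>) \<subseteq> params \<phi> \<union> set xs"
    using params_subst_par[of s \<phi>] by (force simp: s_def split: if_splits)
  show "fv (subst_par s \<phi>) \<subseteq> fv \<phi> - {p..<p + length xs}"
    by (auto simp: fv_subst_par s_def)
  have "env_override s g = plug p xs g" for g
    by (auto simp: fun_eq_iff env_override_def s_def plug_def)
  then show "sat D F R (subst_par s \<phi>) g = sat D F R \<phi> (plug p xs g)" for g
    by (simp add: sat_subst_par)
qed

definition same_type_on :: "'a set \<Rightarrow> ('f \<Rightarrow> 'a list \<Rightarrow> 'a) \<Rightarrow> ('r \<Rightarrow> 'a list \<Rightarrow> bool)
                             \<Rightarrow> 'a set \<Rightarrow> nat set \<Rightarrow> (nat \<Rightarrow> 'a) \<Rightarrow> (nat \<Rightarrow> 'a) \<Rightarrow> bool" where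
  "same_type_on D F R M X g1 g2 \<longleftrightarrow>
     (\<forall>\<phi>. params \<phi> \<subseteq> M \<longrightarrow> fv \<phi> \<subseteq> X \<longrightarrow> sat D F R \<phi> g1 = sat D F R \<phi> g2)"

lemma same_type_on_refl: "same_type_on D F R M X g g"
  by (simp add: same_type_on_def)

lemma same_type_on_sym: "same_type_on D F R M X g1 g2 \<Longrightarrow> same_type_on D F R M X g2 g1"
  by (simp add: same_type_on_def)

lemma same_type_on_trans:
  "same_type_on D F R M X g1 g2 \<Longrightarrow> same_type_on D F R M X g2 g3 \<Longrightarrow> same_type_on D F R M X g1 g3"
  by (simp add: same_type_on_def)

lemma same_type_on_mono: "same_type_on D F R M X g1 g2 \<Longrightarrow> Y \<subseteq> X \<Longrightarrow> same_type_on D F R M Y g1 g2"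
  by (auto simp: same_type_on_def)

lemma tp_length_eq: "tp D F R xs C = tp D F R ys C \<Longrightarrow> length xs = length ys"
proof -
  have Var_in_tp: "Eq (Var n) (Var n) \<in> tp D F R zs C \<longleftrightarrow> n < length zs" for n zs
    by (auto simp: tp_def fmls_over_def holds_def)
  assume "tp D F R xs C = tp D F R ys C"
  then have "n < length xs \<longleftrightarrow> n < length ys" for n
    by (simp flip: Var_in_tp)
  then show ?thesis by (metis nat_neq_iff less_irrefl)
qed

lemma tp_eq_sat_plug:
  assumes tp: "tp D F R a C = tp D F R b C" and pC: "params \<phi> \<subseteq> C" and gC: "\<forall>k. g k \<in> C"
  shows "sat D F R \<phi> (plug p a g) = sat D F R \<phi> (plug p b g)"
proof -
  have len: "length b = length a" using tp_length_eq[OF tp] by simp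
  obtain \<chi> where "\<chi> \<in> fmls_over C (length a)"
    and \<chi>: "\<And>xs. length xs = length a \<Longrightarrow> holds D F R \<chi> xs = sat D F R \<phi> (plug p xs g)"
    using block_formula[OF pC gC] by blast
  then have "holds D F R \<chi> a = holds D F R \<chi> b"
    using tp len by (auto simp: tp_def set_eq_iff)
  then show ?thesis using \<chi> len by simp
qed

text \<open>If \<phi> held in one context and failed in the other, the formula saying so would lie in
tp(a/B); a realization of it in M turns \<phi> into a formula over M separating g1 from g2.\<close>

lemma fin_sat_in_plug_cong:
  assumes fs: "fin_sat_in D F R A B M" and aA: "set a \<subseteq> A" and MB: "M \<subseteq> B"
    and pM: "params \<phi> \<subseteq> M" and g1B: "\<forall>k. g1 k \<in> B" and g2B: "\<forall>k. g2 k \<in> B"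
    and ty: "same_type_on D F R M (fv \<phi> - {p..<p + length a}) g1 g2"
  shows "sat D F R \<phi> (plug p a g1) = sat D F R \<phi> (plug p a g2)"
proof -
  have False if h1B: "\<forall>k. h1 k \<in> B" and h2B: "\<forall>k. h2 k \<in> B"
    and ty': "same_type_on D F R M (fv \<phi> - {p..<p + length a}) h1 h2"
    and s1: "sat D F R \<phi> (plug p a h1)" and s2: "\<not> sat D F R \<phi> (plug p a h2)" for h1 h2
  proof -
    have pB: "params \<phi> \<subseteq> B" using pM MB by blast
    obtain \<chi>1 where \<chi>1: "\<chi>1 \<in> fmls_over B (length a)"
      "\<And>xs. length xs = length a \<Longrightarrow> holds D F R \<chi>1 xs = sat D F R \<phi> (plug p xs h1)"
      using block_formula[OF pB h1B] by blast
    obtain \<chi>2 where \<chi>2: "\<chi>2 \<in> fmls_over B (length a)"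
      "\<And>xs. length xs = length a \<Longrightarrow> holds D F R \<chi>2 xs = sat D F R \<phi> (plug p xs h2)"
      using block_formula[OF pB h2B] by blast
    have "Conj \<chi>1 (Neg \<chi>2) \<in> tp D F R a B"
      using \<chi>1 \<chi>2 s1 s2 by (auto simp: tp_def fmls_over_def holds_def)
    then obtain ms where ms: "length ms = length a" "set ms \<subseteq> M"
      and "holds D F R (Conj \<chi>1 (Neg \<chi>2)) ms"
      using fs aA unfolding fin_sat_in_def by blast
    then have "sat D F R \<phi> (plug p ms h1)" "\<not> sat D F R \<phi> (plug p ms h2)"
      using \<chi>1 \<chi>2 by (auto simp: holds_def)
    moreover obtain \<psi> where p\<psi>: "params \<psi> \<subseteq> params \<phi> \<union> set ms"
      and fv\<psi>: "fv \<psi> \<subseteq> fv \<phi> - {p..<p + length ms}"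
      and \<psi>: "\<And>g. sat D F R \<psi> g = sat D F R \<phi> (plug p ms g)"
      using block_instance by blast
    have "params \<psi> \<subseteq> M" using p\<psi> pM ms(2) by blast
    then have "sat D F R \<psi> h1 = sat D F R \<psi> h2"
      using ty' fv\<psi> ms(1) unfolding same_type_on_def by simp
    ultimately show False by (simp add: \<psi>)
  qed
  then show ?thesis using g1B g2B ty same_type_on_sym by metis
qed

lemma full_realizes_type:
  assumes full: "full D F R M C" and MC: "M \<subseteq> C" and m0: "m0 \<in> M" and uD: "\<forall>k<N. u k \<in> D"
  obtains c where "\<forall>k. c k \<in> C" and "same_type_on D F R M {..<N} u c"
proof -
  define bs where "bs = map u [0..<N]"
  have lbs: "length bs = N" by (simp add: bs_def)
  have "tp D F R bs M \<in> Sn D F R M N"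
    unfolding Sn_def
  proof (intro CollectI conjI ballI)
    show "tp D F R bs M \<subseteq> fmls_over M N" by (auto simp: tp_def lbs)
    show "\<phi> \<in> tp D F R bs M \<or> Neg \<phi> \<in> tp D F R bs M" if "\<phi> \<in> fmls_over M N" for \<phi>
      using that by (auto simp: tp_def lbs fmls_over_def holds_def)
    show "fin_sat_in_monster D F R N (tp D F R bs M)"
      unfolding fin_sat_in_monster_def
      by (intro allI impI exI[of _ bs]) (use lbs uD in \<open>auto simp: tp_def bs_def\<close>)
  qed
  then obtain cs where cs: "length cs = N" "set cs \<subseteq> C" "tp D F R bs M \<subseteq> tp D F R cs M"
    using full unfolding full_def by blast
  define c where "c = plug 0 cs (\<lambda>_. m0)"
  have "sat D F R \<psi> u = sat D F R \<psi> c" if pM: "params \<psi> \<subseteq> M" and fvN: "fv \<psi> \<subseteq> {..<N}" for \<psi>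
  proof -
    have "sat D F R \<psi> u = holds D F R \<psi> bs"
      unfolding holds_def by (rule sat_cong) (use fvN in \<open>auto simp: bs_def\<close>)
    moreover have "sat D F R \<psi> c = holds D F R \<psi> cs"
      unfolding c_def by (rule holds_plug[symmetric]) (use fvN cs(1) in simp)
    moreover have "\<psi> \<in> fmls_over M N" "Neg \<psi> \<in> fmls_over M N"
      using pM fvN by (auto simp: fmls_over_def)
    ultimately show ?thesis
      using cs(3) by (auto simp: tp_def lbs holds_def)
  qed
  moreover have "\<forall>k. c k \<in> C"
    using cs m0 MC by (auto intro: plug_in simp: c_def)
  ultimately show ?thesis using that by (auto simp: same_type_on_def)
qed

lemma same_type_on_plug:
  fixes F :: "'f \<Rightarrow> 'a list \<Rightarrow> 'a" and R :: "'r \<Rightarrow> 'a list \<Rightarrow> bool"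
  assumes full: "full D F R M C" and MC: "M \<subseteq> C" and m0: "m0 \<in> M"
    and CBa: "C \<subseteq> Ba" and BaD: "Ba \<subseteq> D" and CBb: "C \<subseteq> Bb"
    and ga: "\<forall>k. ga k \<in> Ba" and gb: "\<forall>k. gb k \<in> Bb"
    and fsa: "fin_sat_in D F R Aa Ba M" "set a \<subseteq> Aa"
    and fsb: "fin_sat_in D F R Ab Bb M" "set b \<subseteq> Ab"
    and tp: "tp D F R a C = tp D F R b C"
    and ty: "same_type_on D F R M UNIV ga gb"
  shows "same_type_on D F R M UNIV (plug p a ga) (plug p b gb)"
  unfolding same_type_on_def
proof (intro allI impI)
  fix \<phi> :: "('f, 'r, 'a) fml"
  assume pM: "params \<phi> \<subseteq> M"
  obtain N where N: "fv \<phi> \<subseteq> {..<N}"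
    using finite_fv finite_nat_set_iff_bounded by (metis lessThan_iff subsetI)
  obtain c where cC: "\<forall>k. c k \<in> C" and tyc: "same_type_on D F R M {..<N} ga c"
    using full_realizes_type[OF full MC m0] ga BaD by blast
  have len: "length b = length a" using tp_length_eq[OF tp] by simp
  let ?X = "fv \<phi> - {p..<p + length a}"
  have tya: "same_type_on D F R M ?X ga c"
    using same_type_on_mono[OF tyc] N by blast
  have tyb: "same_type_on D F R M ?X gb c"
    using same_type_on_trans[OF same_type_on_sym[OF same_type_on_mono[OF ty]] tya] by blast
  have "sat D F R \<phi> (plug p a ga) = sat D F R \<phi> (plug p a c)"
    by (rule fin_sat_in_plug_cong[OF fsa _ pM ga _ tya]) (use MC CBa cC in auto)
  also have "\<dots> = sat D F R \<phi> (plug p b c)"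
    by (rule tp_eq_sat_plug[OF tp _ cC]) (use pM MC in auto)
  also have "\<dots> = sat D F R \<phi> (plug p b gb)"
    using fin_sat_in_plug_cong[OF fsb _ pM gb _ tyb[folded len]] MC CBb cC by auto
  finally show "sat D F R \<phi> (plug p a ga) = sat D F R \<phi> (plug p b gb)" .
qed

section \<open>Sequences of matched blocks\<close>

lemma below_mono: "i \<le> j \<Longrightarrow> below A i \<subseteq> below A j"
  by (auto simp: below_def intro: order_less_le_trans)

lemma UN_subset_below: "\<forall>j\<in>J. j < i \<Longrightarrow> (\<Union>j\<in>J. A j) \<subseteq> below A i"
  by (auto simp: below_def)

definition matched_blocks :: "'a set \<Rightarrow> ('f \<Rightarrow> 'a list \<Rightarrow> 'a) \<Rightarrow> ('r \<Rightarrow> 'a list \<Rightarrow> bool)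
      \<Rightarrow> 'a set \<Rightarrow> ('i::linorder \<Rightarrow> 'a set) \<Rightarrow> 'i \<Rightarrow> 'i list \<Rightarrow> 'i list
      \<Rightarrow> 'a list list \<Rightarrow> 'a list list \<Rightarrow> bool" where
  "matched_blocks D F R C A i0 ixs jxs aa bb \<longleftrightarrow>
     sorted_wrt (<) ixs \<and> sorted_wrt (<) jxs \<and>
     length jxs = length ixs \<and> length aa = length ixs \<and> length bb = length ixs \<and>
     (\<forall>i\<in>set ixs. i0 \<le> i) \<and> (\<forall>j\<in>set jxs. i0 \<le> j) \<and>
     (\<forall>k<length ixs. set (aa ! k) \<subseteq> A (ixs ! k) \<and> set (bb ! k) \<subseteq> A (jxs ! k) \<and>
                     tp D F R (aa ! k) C = tp D F R (bb ! k) C)"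

lemma order_congruence_iff_matched_blocks:
  "order_congruence D F R C A \<longleftrightarrow>
     (\<forall>i0 ixs jxs aa bb. matched_blocks D F R C A i0 ixs jxs aa bb \<longrightarrow>
        tp D F R (concat aa) (C \<union> below A i0) = tp D F R (concat bb) (C \<union> below A i0))"
  unfolding order_congruence_def matched_blocks_def ..

lemma matched_blocks_snoc:
  assumes "length jxs = length ixs" "length aa = length ixs" "length bb = length ixs"
  shows "matched_blocks D F R C A i0 (ixs @ [i]) (jxs @ [j]) (aa @ [a]) (bb @ [b]) \<longleftrightarrow>
     matched_blocks D F R C A i0 ixs jxs aa bb \<and>
     (\<forall>i'\<in>set ixs. i' < i) \<and> (\<forall>j'\<in>set jxs. j' < j) \<and> i0 \<le> i \<and> i0 \<le> j \<and>
     set a \<subseteq> A i \<and> set b \<subseteq> A j \<and> tp D F R a C = tp D F R b C"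
  using assms by (auto simp: matched_blocks_def sorted_wrt_append All_less_Suc nth_append)

lemma concat_subset_UN:
  assumes "length aa = length ixs" and "\<forall>k<length ixs. set (aa ! k) \<subseteq> A (ixs ! k)"
  shows "set (concat aa) \<subseteq> (\<Union>i\<in>set ixs. A i)"
proof
  fix x assume "x \<in> set (concat aa)"
  then obtain y where "y \<in> set aa" "x \<in> set y" by auto
  then obtain k where "k < length aa" "x \<in> set (aa ! k)"
    by (auto simp: in_set_conv_nth)
  then show "x \<in> (\<Union>i\<in>set ixs. A i)"
    using assms nth_mem[of k ixs] by fastforce
qed

lemma matched_blocks_concat:
  assumes "matched_blocks D F R C A i0 ixs jxs aa bb"
  shows "set (concat aa) \<subseteq> (\<Union>i\<in>set ixs. A i)" and "set (concat bb) \<subseteq> (\<Union>j\<in>set jxs. A j)"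
  using assms concat_subset_UN[of aa ixs A] concat_subset_UN[of bb jxs A]
  by (simp_all add: matched_blocks_def)


lemma matched_blocks_length_concat:
  assumes "matched_blocks D F R C A i0 ixs jxs aa bb"
  shows "length (concat aa) = length (concat bb)"
proof -
  have "map length aa = map length bb"
  proof (rule nth_equalityI)
    show "length (map length aa) = length (map length bb)"
      using assms by (simp add: matched_blocks_def)
    show "map length aa ! k = map length bb ! k" if "k < length (map length aa)" for k
    proof -
      have "tp D F R (aa ! k) C = tp D F R (bb ! k) C" "k < length aa" "k < length bb"
        using assms that by (auto simp: matched_blocks_def)
      then show ?thesis using tp_length_eq by simp
    qed
  qed
  then show ?thesis by (simp add: length_concat)
qed

lemma matched_blocks_same_type:
  assumes full: "full D F R M C" and MC: "M \<subseteq> C" and CD: "C \<subseteq> D" and m0: "m0 \<in> M"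
    and AD: "\<forall>i. A i \<subseteq> D" and fs: "fs_sequence D F R M C A"
    and e: "\<forall>k. e k \<in> C \<union> below A i0"
  shows "matched_blocks D F R C A i0 ixs jxs aa bb \<Longrightarrow>
    same_type_on D F R M UNIV (plug 0 (concat aa) e) (plug 0 (concat bb) e)"
proof (induction ixs arbitrary: jxs aa bb rule: rev_induct)
  case Nil
  then show ?case by (simp add: matched_blocks_def same_type_on_refl)
next
  case (snoc i ixs)
  have "length jxs = Suc (length ixs)" "length aa = Suc (length ixs)" "length bb = Suc (length ixs)"
    using snoc.prems by (simp_all add: matched_blocks_def)
  then obtain jxs' j aa' a bb' b where split: "jxs = jxs' @ [j]" "aa = aa' @ [a]" "bb = bb' @ [b]"
    and lens: "length jxs' = length ixs" "length aa' = length ixs" "length bb' = length ixs"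
    unfolding length_Suc_conv_rev by blast
  note m = snoc.prems[unfolded split matched_blocks_snoc[OF lens]]
  then have m': "matched_blocks D F R C A i0 ixs jxs' aa' bb'"
    and lt: "\<forall>i'\<in>set ixs. i' < i" "\<forall>j'\<in>set jxs'. j' < j" and i0: "i0 \<le> i" "i0 \<le> j"
    and ab: "set a \<subseteq> A i" "set b \<subseteq> A j" "tp D F R a C = tp D F R b C"
    by simp_all
  have below_D: "below A k \<union> C \<subseteq> D" for k
    using AD CD by (auto simp: below_def)
  have env: "\<forall>k. plug 0 (concat cc) e k \<in> below A k' \<union> C"
    if "set (concat cc) \<subseteq> (\<Union>k\<in>set ks. A k)" "\<forall>k\<in>set ks. k < k'" "i0 \<le> k'" for cc ks k'
  proof (rule allI, rule plug_in)
    show "set (concat cc) \<subseteq> below A k' \<union> C"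
      using subset_trans[OF that(1) UN_subset_below[OF that(2)]] by (rule le_supI1)
    show "\<forall>k. e k \<in> below A k' \<union> C"
      using e below_mono[OF that(3), of A] by auto
  qed
  have "same_type_on D F R M UNIV
      (plug (length (concat aa')) a (plug 0 (concat aa') e))
      (plug (length (concat aa')) b (plug 0 (concat bb') e))"
  proof (rule same_type_on_plug[OF full MC m0 _ below_D _ _ _ _ ab(1) _ ab(2,3)])
    show "\<forall>k. plug 0 (concat aa') e k \<in> below A i \<union> C"
      by (rule env[OF matched_blocks_concat(1)[OF m'] lt(1) i0(1)])
    show "\<forall>k. plug 0 (concat bb') e k \<in> below A j \<union> C"
      by (rule env[OF matched_blocks_concat(2)[OF m'] lt(2) i0(2)])
    show "fin_sat_in D F R (A i) (below A i \<union> C) M" "fin_sat_in D F R (A j) (below A j \<union> C) M"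
      using fs by (simp_all add: fs_sequence_def)
    show "same_type_on D F R M UNIV (plug 0 (concat aa') e) (plug 0 (concat bb') e)"
      by (rule snoc.IH[OF m'])
  qed blast+
  then show ?case
    using matched_blocks_length_concat[OF m'] by (simp add: split plug_append)
qed

lemma abstract_params:
  assumes pX: "params \<phi> \<subseteq> X" and x0: "x0 \<in> X" and fvL: "fv \<phi> \<subseteq> {..<L}"
  obtains \<psi> E where "params \<psi> = {}" and "\<forall>k. E k \<in> X"
    and "\<And>zs. length zs = L \<Longrightarrow> holds D F R \<phi> zs = sat D F R \<psi> (plug 0 zs E)"
proof -
  obtain h0 :: "_ \<Rightarrow> nat" where inj0: "inj_on h0 (params \<phi>)"
    using ex_bij_betw_finite_nat[OF finite_params] bij_betw_imp_inj_on by blast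
  obtain N where N: "\<forall>n\<in>bound_vars \<phi>. n < N"
    using finite_bound_vars finite_nat_set_iff_bounded by blast
  \<comment> \<open>fresh variables, clear of the tuple positions and of the bound variables\<close>
  define h where "h a = N + L + h0 a" for a
  have inj: "inj_on h (params \<phi>)"
    using inj0 by (simp add: inj_on_def h_def)
  define E where "E k = (if k \<in> h ` params \<phi> then inv_into (params \<phi>) h k else x0)" for k
  have EX: "\<forall>k. E k \<in> X"
    using pX x0 by (auto simp: E_def inv_into_into)
  have E_h: "plug 0 zs E (h a) = a" if "length zs = L" "a \<in> params \<phi>" for zs a
  proof -
    have "\<not> h a < L" by (simp add: h_def)
    then show ?thesis using that inj by (simp add: plug_def E_def)
  qed
  have holds_abstract: "holds D F R \<phi> zs = sat D F R (abstract_par h (params \<phi>) \<phi>) (plug 0 zs E)"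
    if "length zs = L" for zs
  proof -
    have "holds D F R \<phi> zs = sat D F R \<phi> (plug 0 zs E)"
      using fvL that by (simp add: holds_plug)
    also have "\<dots> = sat D F R (abstract_par h (params \<phi>) \<phi>) (plug 0 zs E)"
      by (rule sat_abstract_par[symmetric]) (use E_h that N in \<open>auto simp: h_def\<close>)
    finally show ?thesis .
  qed
  have "params (abstract_par h (params \<phi>) \<phi>) = {}"
    by (simp add: params_abstract_par)
  then show ?thesis by (rule that[OF _ EX holds_abstract])
qed

theorem proposition2:
  fixes D :: "'a set" and F :: "'f \<Rightarrow> 'a list \<Rightarrow> 'a" and R :: "'r \<Rightarrow> 'a list \<Rightarrow> bool"
    and K :: "'k set" and M C :: "'a set" and A :: "'i::linorder \<Rightarrow> 'a set"
  assumes "is_structure D F"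
    and "saturated D F R K"
    and "elem_sub M D F R"
    and "(card_of M, card_of K) \<in> ordLess"
    and "M \<subseteq> C" and "C \<subseteq> D"
    and "full D F R M C"
    and "\<forall>i. A i \<subseteq> D"
    and "fs_sequence D F R M C A"
  shows "order_congruence D F R C A"
  unfolding order_congruence_iff_matched_blocks
proof (intro allI impI)
  fix i0 :: 'i and ixs jxs aa bb
  assume m: "matched_blocks D F R C A i0 ixs jxs aa bb"
  obtain m0 where m0: "m0 \<in> M"
    using assms(3) by (auto simp: elem_sub_def is_structure_def)
  let ?X = "C \<union> below A i0" and ?L = "length (concat aa)"
  have len: "length (concat bb) = ?L"
    using matched_blocks_length_concat[OF m] by simp
  have "holds D F R \<phi> (concat aa) = holds D F R \<phi> (concat bb)" if "\<phi> \<in> fmls_over ?X ?L" for \<phi>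
  proof -
    have \<phi>: "params \<phi> \<subseteq> ?X" "m0 \<in> ?X" "fv \<phi> \<subseteq> {..<?L}"
      using that m0 assms(5) by (auto simp: fmls_over_def)
    obtain \<psi> E where "params \<psi> = {}" and E: "\<forall>k. E k \<in> ?X"
      and \<psi>: "\<And>zs. length zs = ?L \<Longrightarrow> holds D F R \<phi> zs = sat D F R \<psi> (plug 0 zs E)"
      using abstract_params[where D = D and F = F and R = R, OF \<phi>] by metis
    moreover have "same_type_on D F R M UNIV (plug 0 (concat aa) E) (plug 0 (concat bb) E)"
      by (rule matched_blocks_same_type[OF assms(7,5,6) m0 assms(8,9) E m])
    ultimately show ?thesis
      using len by (simp add: same_type_on_def)
  qed
  then show "tp D F R (concat aa) ?X = tp D F R (concat bb) ?X"
    using len by (auto simp: tp_def)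
qed

end
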